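(* For every $\varepsilon>0$ and integer $k\ge2$ there exists $\eta=\eta(\varepsilon,k,\Omega)>0$ such that for every $n>1/\eta$ every $\mu\in\mathcal P(\Omega^n)$ has pairwise disjoint $(\varepsilon,k)$-states $S_1,\dots,S_N$ such that $\mu(S_i)\ge\eta$ for all $i\in[N]$ and $\sum_{i=1}^N\mu(S_i)\ge1-\varepsilon$.
   Context: $\Omega$ is a fixed finite nonempty set, $\mathcal P(\mathcal X)$ the set of probability measures on a finite set $\mathcal X$, $\|\cdot\|_{TV}$ total variation. For $\mu\in\mathcal P(\Omega^n)$ and $S\subset\Omega^n$ with $\mu(S)>0$, $\mu[\cdot|S]$ is the conditional measure; for $x_1,\dots,x_k\in[n]$, $\mu_{\downarrow\{x_1,\dots,x_k\}}[\cdot|S]$ denotes the joint law of $(\boldsymbol\sigma(x_1),\dots,\boldsymbol\sigma(x_k))$ for $\boldsymbol\sigma\sim\mu[\cdot|S]$ and $\mu_{\downarrow x}[\cdot|S]$ the law of $\boldsymbol\sigma(x)$. A set $S\subset\Omega^n$ is an $(\varepsilon,k)$-state of $\mu$ if $\mu(S)>0$ and $\frac1{n^k}\sum_{x_1,\dots,x_k\in[n]}\|\mu_{\downarrow\{x_1,\dots,x_k\}}[\cdot|S]-\mu_{\downarrow x_1}[\cdot|S]\otimes\cdots\otimes\mu_{\downarrow x_k}[\cdot|S]\|_{TV}<\varepsilon$. *)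

theory Defs
  imports "HOL-Probability.Probability"
begin

text \<open>Configuration space Omega^n: maps [n] = {0..<n} to the finite type 'a,
  extensional (undefined outside {0..<n}).\<close>
definition config :: "nat \<Rightarrow> (nat \<Rightarrow> 'a::finite) set" where
  "config n = PiE {..<n} (\<lambda>_. UNIV)"

definition tv_dist :: "'b pmf \<Rightarrow> 'b pmf \<Rightarrow> real" where
  "tv_dist p q = (1/2) * (\<Sum>\<^sub>\<infinity> z. \<bar>pmf p z - pmf q z\<bar>)"

definition joint_marg :: "(nat \<Rightarrow> 'a) pmf \<Rightarrow> (nat \<Rightarrow> 'a) set \<Rightarrow> nat \<Rightarrow> (nat \<Rightarrow> nat) \<Rightarrow> (nat \<Rightarrow> 'a) pmf" where
  "joint_marg \<mu> S k xs = map_pmf (\<lambda>\<sigma>. restrict (\<lambda>j. \<sigma> (xs j)) {..<k}) (cond_pmf \<mu> S)"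

definition marg :: "(nat \<Rightarrow> 'a) pmf \<Rightarrow> (nat \<Rightarrow> 'a) set \<Rightarrow> nat \<Rightarrow> 'a pmf" where
  "marg \<mu> S x = map_pmf (\<lambda>\<sigma>. \<sigma> x) (cond_pmf \<mu> S)"

definition prod_marg :: "(nat \<Rightarrow> 'a) pmf \<Rightarrow> (nat \<Rightarrow> 'a) set \<Rightarrow> nat \<Rightarrow> (nat \<Rightarrow> nat) \<Rightarrow> (nat \<Rightarrow> 'a) pmf" where
  "prod_marg \<mu> S k xs = Pi_pmf {..<k} undefined (\<lambda>j. marg \<mu> S (xs j))"

definition is_state :: "real \<Rightarrow> nat \<Rightarrow> nat \<Rightarrow> (nat \<Rightarrow> 'a) pmf \<Rightarrow> (nat \<Rightarrow> 'a) set \<Rightarrow> bool" where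
  "is_state eps k n \<mu> S \<longleftrightarrow>
     measure_pmf.prob \<mu> S > 0 \<and>
     (1 / real n ^ k) * (\<Sum>xs \<in> PiE {..<k} (\<lambda>_. {..<n}).
         tv_dist (joint_marg \<mu> S k xs) (prod_marg \<mu> S k xs)) < eps"

end

theory Submission
  imports Defs
begin

text \<open>For a set \<open>S\<close> of configurations let
  \<open>energy S = \<Sum>\<^sub>x \<Sum>\<^sub>\<omega> \<mu>(S \<inter> {\<sigma> x = \<omega>})\<^sup>2 / \<mu>(S)\<close>; it is at most \<open>n \<mu>(S)\<close>, so a partition
  of \<open>\<Omega>\<^sup>n\<close> has total energy at most \<open>n\<close>. If \<open>S\<close> is not an \<open>(\<epsilon>,k)\<close>-state, the hybrid
  argument turns the average distance between joint and product marginals into the average change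
  of the law of \<open>\<sigma> x\<close> when conditioning on \<open>j < k\<close> further coordinates; by Cauchy--Schwarz,
  splitting \<open>S\<close> according to the values of these coordinates raises the energy by at least
  \<open>4\<epsilon>\<^sup>2 n \<mu>(S) / (k\<^sup>2 |\<Omega>|)\<close> while creating at most \<open>|\<Omega>|\<^sup>k\<close> pieces. Refining all non-states
  as long as they carry mass \<open>\<ge> \<epsilon>/2\<close> thus stops after a number of rounds independent of \<open>n\<close>,
  with at most \<open>K\<close> blocks; the blocks of mass below \<open>\<epsilon>/(2K)\<close> carry mass at most \<open>\<epsilon>/2\<close>, and
  the remaining states cover mass \<open>1 - \<epsilon>\<close>.\<close>

lemma measure_cond_pmf:
  assumes "measure_pmf.prob p S > 0"
  shows "measure_pmf.prob (cond_pmf p S) A = measure_pmf.prob p (A \<inter> S) / measure_pmf.prob p S"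
proof -
  have ne: "set_pmf p \<inter> S \<noteq> {}"
    using assms by (metis measure_Int_set_pmf measure_empty inf_commute less_irrefl)
  have "emeasure (measure_pmf p) S \<noteq> 0"
    using assms by (simp add: measure_pmf.emeasure_eq_measure)
  then show ?thesis
    by (simp add: cond_pmf.rep_eq[OF ne] Int_commute)
qed

lemma prob_disjoint_UN:
  assumes "finite I" "disjoint_family_on A I"
  shows "measure_pmf.prob p (\<Union>i\<in>I. A i) = (\<Sum>i\<in>I. measure_pmf.prob p (A i))"
  using measure_pmf.finite_measure_finite_Union[of I A p] assms by simp

lemma prob_partition:
  assumes "partition_on A P" "finite P"
  shows "measure_pmf.prob p A = (\<Sum>T\<in>P. measure_pmf.prob p T)"
  using prob_disjoint_UN[of P id p] assms
  by (simp add: partition_on_def disjoint_family_on_def pairwise_def disjnt_def)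

lemma prob_eq_1_if_set_pmf_subset: "set_pmf \<mu> \<subseteq> A \<Longrightarrow> measure_pmf.prob \<mu> A = 1"
  by (subst measure_pmf.prob_eq_1) (auto intro!: AE_pmfI)

lemma tv_dist_finite_support:
  assumes "finite F" "\<And>a. a \<notin> F \<Longrightarrow> pmf p a = 0" "\<And>a. a \<notin> F \<Longrightarrow> pmf q a = 0"
  shows "tv_dist p q = (1/2) * (\<Sum>a\<in>F. \<bar>pmf p a - pmf q a\<bar>)"
proof -
  have "(\<Sum>\<^sub>\<infinity> z. \<bar>pmf p z - pmf q z\<bar>) = (\<Sum>\<^sub>\<infinity> z\<in>F. \<bar>pmf p z - pmf q z\<bar>)"
    by (rule infsum_cong_neutral) (use assms in auto)
  then show ?thesis
    unfolding tv_dist_def using assms(1) by simp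
qed

lemma sum_PiE_insert:
  assumes "x \<notin> S"
  shows "(\<Sum>f\<in>PiE (insert x S) T. F f) = (\<Sum>g\<in>PiE S T. \<Sum>y\<in>T x. F (g(x := y)))"
  unfolding PiE_insert_eq
  by (subst sum.reindex[OF inj_combinator[OF assms]], subst sum.swap)
     (simp add: sum.cartesian_product case_prod_beta)

lemma sum_PiE_eval_coordinate:
  fixes F :: "(nat \<Rightarrow> nat) \<Rightarrow> nat \<Rightarrow> real"
  assumes "j < k" and upd_eq: "\<And>xs y x. F (xs(j:=y)) x = F xs x"
  shows "real n * (\<Sum>xs\<in>PiE {..<k} (\<lambda>_. {..<n}). F xs (xs j)) =
         (\<Sum>xs\<in>PiE {..<k} (\<lambda>_. {..<n}). \<Sum>x<n. F xs x)"
proof -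
  let ?P = "PiE {..<k} (\<lambda>_. {..<n::nat})"
  define swap where "swap = (\<lambda>(xs::nat\<Rightarrow>nat, x::nat). (xs(j:=x), xs j))"
  have "(\<Sum>xs\<in>?P. \<Sum>x<n. F xs x) = (\<Sum>(xs,x)\<in>?P \<times> {..<n}. F (xs(j:=x)) ((xs(j:=x)) j))"
    unfolding sum.cartesian_product[symmetric] by (intro sum.cong refl) (simp add: upd_eq)
  also have "\<dots> = (\<Sum>(xs,x)\<in>?P \<times> {..<n}. F xs (xs j))"
    by (rule sum.reindex_bij_witness[where i=swap and j=swap])
       (use \<open>j < k\<close> in \<open>auto simp: swap_def PiE_def extensional_def Pi_def\<close>)
  also have "\<dots> = real n * (\<Sum>xs\<in>?P. F xs (xs j))"
    by (simp add: sum.cartesian_product[symmetric] sum_distrib_left)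
  finally show ?thesis by simp
qed

text \<open>The hybrid argument: replace the coordinates of a joint law one at a time by
  independent ones.\<close>

lemma hybrid_bound:
  fixes J :: "nat \<Rightarrow> (nat \<Rightarrow> 'a::finite) \<Rightarrow> real" and p :: "nat \<Rightarrow> 'a \<Rightarrow> real"
  assumes p_sum: "\<And>i. (\<Sum>\<omega>\<in>UNIV. p i \<omega>) = 1" and p_nonneg: "\<And>i \<omega>. p i \<omega> \<ge> 0"
    and J_0: "\<And>\<tau>. J 0 \<tau> = 1"
  shows "(\<Sum>a\<in>PiE {..<k} (\<lambda>_. UNIV). \<bar>J k a - (\<Prod>i<k. p i (a i))\<bar>)
     \<le> (\<Sum>j<k. \<Sum>\<tau>\<in>PiE {..<j} (\<lambda>_. UNIV). \<Sum>\<omega>\<in>UNIV. \<bar>J (Suc j) (\<tau>(j:=\<omega>)) - J j \<tau> * p j \<omega>\<bar>)"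
proof (induction k)
  case 0
  then show ?case by (simp add: J_0)
next
  case (Suc k)
  let ?P = "PiE {..<k} (\<lambda>_. (UNIV::'a set))"
  let ?\<Pi> = "\<lambda>\<tau>. \<Prod>i<k. p i (\<tau> i)"
  let ?D = "\<lambda>\<tau> \<omega>. \<bar>J (Suc k) (\<tau>(k:=\<omega>)) - J k \<tau> * p k \<omega>\<bar>"
  have prod_upd: "(\<Prod>i<Suc k. p i ((\<tau>(k:=\<omega>)) i)) = p k \<omega> * ?\<Pi> \<tau>" for \<tau> \<omega>
    by (simp add: prod.lessThan_Suc mult.commute)
  have triangle: "\<bar>J (Suc k) (\<tau>(k:=\<omega>)) - p k \<omega> * ?\<Pi> \<tau>\<bar> \<le> ?D \<tau> \<omega> + p k \<omega> * \<bar>J k \<tau> - ?\<Pi> \<tau>\<bar>"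
    for \<tau> \<omega>
  proof -
    have "\<bar>J (Suc k) (\<tau>(k:=\<omega>)) - p k \<omega> * ?\<Pi> \<tau>\<bar> \<le> ?D \<tau> \<omega> + \<bar>p k \<omega> * (J k \<tau> - ?\<Pi> \<tau>)\<bar>"
      by (smt (verit) right_diff_distrib mult.commute)
    then show ?thesis
      using p_nonneg[of k \<omega>] by (simp add: abs_mult)
  qed
  have "(\<Sum>a\<in>PiE {..<Suc k} (\<lambda>_. UNIV). \<bar>J (Suc k) a - (\<Prod>i<Suc k. p i (a i))\<bar>)
      = (\<Sum>\<tau>\<in>?P. \<Sum>\<omega>\<in>UNIV. \<bar>J (Suc k) (\<tau>(k:=\<omega>)) - p k \<omega> * ?\<Pi> \<tau>\<bar>)"
    by (simp add: lessThan_Suc sum_PiE_insert prod_upd)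
  also have "\<dots> \<le> (\<Sum>\<tau>\<in>?P. \<Sum>\<omega>\<in>UNIV. ?D \<tau> \<omega> + p k \<omega> * \<bar>J k \<tau> - ?\<Pi> \<tau>\<bar>)"
    by (intro sum_mono triangle)
  also have "\<dots> = (\<Sum>\<tau>\<in>?P. \<Sum>\<omega>\<in>UNIV. ?D \<tau> \<omega>) + (\<Sum>\<tau>\<in>?P. \<bar>J k \<tau> - ?\<Pi> \<tau>\<bar>)"
    by (simp add: sum.distrib sum_distrib_right[symmetric] p_sum)
  also have "\<dots> \<le> (\<Sum>j<Suc k. \<Sum>\<tau>\<in>PiE {..<j} (\<lambda>_. UNIV). \<Sum>\<omega>\<in>UNIV. \<bar>J (Suc j) (\<tau>(j:=\<omega>)) - J j \<tau> * p j \<omega>\<bar>)"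
    by (simp only: sum.lessThan_Suc) (use Suc.IH in linarith)
  finally show ?case .
qed

lemma Cauchy_Schwarz_sum_weighted:
  fixes u w :: "'i \<Rightarrow> real"
  assumes "\<And>i. i \<in> I \<Longrightarrow> w i \<ge> 0" and "\<And>i. i \<in> I \<Longrightarrow> w i = 0 \<Longrightarrow> u i = 0"
  shows "(\<Sum>i\<in>I. \<bar>u i\<bar>)\<^sup>2 \<le> (\<Sum>i\<in>I. w i) * (\<Sum>i\<in>I. (u i)\<^sup>2 / w i)"
proof -
  have "(\<Sum>i\<in>I. \<bar>u i\<bar>) = (\<Sum>i\<in>I. sqrt (w i) * (\<bar>u i\<bar> / sqrt (w i)))"
    using assms by (intro sum.cong refl) (auto simp: field_simps)
  moreover have "(\<Sum>i\<in>I. (sqrt (w i))\<^sup>2) = (\<Sum>i\<in>I. w i)"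
    using assms by (intro sum.cong) auto
  moreover have "(\<Sum>i\<in>I. (\<bar>u i\<bar> / sqrt (w i))\<^sup>2) = (\<Sum>i\<in>I. (u i)\<^sup>2 / w i)"
    using assms by (intro sum.cong refl) (auto simp: power_divide)
  ultimately show ?thesis
    using Cauchy_Schwarz_ineq_sum[of "\<lambda>i. sqrt (w i)" "\<lambda>i. \<bar>u i\<bar> / sqrt (w i)" I] by simp
qed

text \<open>The right-hand side is the increase of \<open>\<Sum> g\<^sup>2/w\<close> when the pooled ratio \<open>G/W\<close> is
  refined into the individual ratios \<open>g i / w i\<close>.\<close>

lemma sum_abs_deviation_sq_le:
  fixes g w :: "'i \<Rightarrow> real"
  assumes g_nonneg: "\<And>i. i \<in> I \<Longrightarrow> 0 \<le> g i" and g_le: "\<And>i. i \<in> I \<Longrightarrow> g i \<le> w i"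
    and W_pos: "(\<Sum>i\<in>I. w i) > 0"
  shows "(\<Sum>i\<in>I. \<bar>g i - w i * (\<Sum>i\<in>I. g i) / (\<Sum>i\<in>I. w i)\<bar>)\<^sup>2 / (\<Sum>i\<in>I. w i)
     \<le> (\<Sum>i\<in>I. (g i)\<^sup>2 / w i) - (\<Sum>i\<in>I. g i)\<^sup>2 / (\<Sum>i\<in>I. w i)"
proof -
  define G where "G = (\<Sum>i\<in>I. g i)"
  define W where "W = (\<Sum>i\<in>I. w i)"
  have W: "W > 0" using W_pos W_def by simp
  define u where "u i = g i - w i * G / W" for i
  have u_sq: "(u i)\<^sup>2 / w i = (g i)\<^sup>2 / w i - 2 * g i * G / W + w i * G\<^sup>2 / W\<^sup>2" if "i \<in> I" for i
  proof (cases "w i = 0")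
    case True
    then have "g i = 0" using g_nonneg g_le that by force
    then show ?thesis using True by (simp add: u_def)
  next
    case False
    then show ?thesis using W by (simp add: u_def field_simps power2_eq_square)
  qed
  have "(\<Sum>i\<in>I. (u i)\<^sup>2 / w i) = (\<Sum>i\<in>I. (g i)\<^sup>2 / w i) - 2 * G * G / W + W * G\<^sup>2 / W\<^sup>2"
    using u_sq
    by (simp add: sum.distrib sum_subtractf sum_divide_distrib[symmetric]
        sum_distrib_right[symmetric] G_def W_def)
       (simp add: sum_distrib_left[symmetric])
  also have "\<dots> = (\<Sum>i\<in>I. (g i)\<^sup>2 / w i) - G\<^sup>2 / W"
    using W by (simp add: field_simps power2_eq_square)
  finally have u_sum: "(\<Sum>i\<in>I. (u i)\<^sup>2 / w i) = (\<Sum>i\<in>I. (g i)\<^sup>2 / w i) - G\<^sup>2 / W" .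
  have "(\<Sum>i\<in>I. \<bar>u i\<bar>)\<^sup>2 \<le> W * (\<Sum>i\<in>I. (u i)\<^sup>2 / w i)"
    unfolding W_def
    by (rule Cauchy_Schwarz_sum_weighted)
       (use g_nonneg g_le in \<open>force simp: u_def\<close>)+
  then have "(\<Sum>i\<in>I. \<bar>u i\<bar>)\<^sup>2 / W \<le> (\<Sum>i\<in>I. (u i)\<^sup>2 / w i)"
    using W by (simp add: divide_le_eq mult.commute)
  then show ?thesis using u_sum by (simp add: u_def G_def W_def)
qed

lemma partition_on_disjoint_family:
  assumes "disjoint_family_on A I" "(\<Union>i\<in>I. A i) = S"
  shows "partition_on S (A ` I - {{}})"
proof (rule partition_onI)
  show "\<Union>(A ` I - {{}}) = S" "{} \<notin> A ` I - {{}}"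
    using assms(2) by auto
  fix U V assume "U \<in> A ` I - {{}}" "V \<in> A ` I - {{}}" "U \<noteq> V"
  then obtain i j where "i \<in> I" "j \<in> I" "U = A i" "V = A j" "i \<noteq> j"
    by blast
  then show "disjnt U V"
    using assms(1) by (auto simp: disjoint_family_on_def disjnt_def)
qed

lemma sum_image_diff_empty:
  assumes "finite I" "disjoint_family_on A I" "f {} = 0"
  shows "(\<Sum>U\<in>A ` I - {{}}. f U) = (\<Sum>i\<in>I. f (A i))"
proof -
  have "(\<Sum>U\<in>A ` I - {{}}. f U) = (\<Sum>U\<in>A ` I. f U)"
    using assms by (intro sum.mono_neutral_left) auto
  also have "\<dots> = (\<Sum>i\<in>I. f (A i))"
  proof (subst sum.reindex_nontrivial[OF \<open>finite I\<close>])
    fix i j assume "i \<in> I" "j \<in> I" "i \<noteq> j" "A i = A j"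
    then have "A i = {}"
      using \<open>disjoint_family_on A I\<close> by (auto simp: disjoint_family_on_def)
    then show "f (A i) = 0" using \<open>f {} = 0\<close> by simp
  qed simp
  finally show ?thesis .
qed

lemma
  assumes P: "partition_on A P" and Q: "\<And>T. T \<in> P \<Longrightarrow> partition_on T (Q T)"
  shows partition_on_UN_refine: "partition_on A (\<Union>T\<in>P. Q T)"
    and disjoint_family_on_refine: "disjoint_family_on Q P"
proof -
  have Q_Un: "\<Union>(Q T) = T" if "T \<in> P" for T
    using partition_onD1[OF Q[OF that]] by simp
  have block_sub: "U \<subseteq> T" "U \<noteq> {}" if "T \<in> P" "U \<in> Q T" for T U
    using Q_Un[OF that(1)] partition_onD3[OF Q[OF that(1)]] that(2) by auto
  have P_disj: "T \<inter> T' = {}" if "T \<in> P" "T' \<in> P" "T \<noteq> T'" for T T'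
    using disjointD[OF partition_onD2[OF P] that] .
  show "disjoint_family_on Q P"
  proof (unfold disjoint_family_on_def, intro ballI impI)
    fix T T' assume TT': "T \<in> P" "T' \<in> P" "T \<noteq> T'"
    show "Q T \<inter> Q T' = {}"
    proof (rule equals0I)
      fix U assume "U \<in> Q T \<inter> Q T'"
      then have "U \<subseteq> T \<inter> T'" "U \<noteq> {}"
        using block_sub[OF TT'(1)] block_sub[OF TT'(2)] by auto
      then show False
        using P_disj[OF TT'] by blast
    qed
  qed
  show "partition_on A (\<Union>T\<in>P. Q T)"
  proof (rule partition_onI)
    have "\<Union>(\<Union>T\<in>P. Q T) = (\<Union>T\<in>P. \<Union>(Q T))"
      by blast
    also have "\<dots> = \<Union>P"
      using Q_Un by simp
    finally show "\<Union>(\<Union>T\<in>P. Q T) = A"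
      using partition_onD1[OF P] by simp
    show "{} \<notin> (\<Union>T\<in>P. Q T)"
      using block_sub(2) by blast
    fix U U' assume "U \<in> (\<Union>T\<in>P. Q T)" "U' \<in> (\<Union>T\<in>P. Q T)" "U \<noteq> U'"
    then obtain T T' where T: "T \<in> P" "U \<in> Q T" and T': "T' \<in> P" "U' \<in> Q T'"
      by blast
    show "disjnt U U'"
    proof (cases "T = T'")
      case True
      then show ?thesis
        using disjointD[OF partition_onD2[OF Q[OF T(1)]] T(2)] T'(2) \<open>U \<noteq> U'\<close> by (simp add: disjnt_def)
    next
      case False
      then show ?thesis
        using P_disj[OF T(1) T'(1)] block_sub(1)[OF T] block_sub(1)[OF T'] by (auto simp: disjnt_def)
    qed
  qed
qed

lemma refine_partition:
  fixes f g :: "'a set \<Rightarrow> real"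
  assumes P: "partition_on A P" "finite P"
    and refine: "\<And>T. T \<in> P \<Longrightarrow>
      \<exists>Q. partition_on T Q \<and> finite Q \<and> card Q \<le> m \<and> f T + g T \<le> (\<Sum>U\<in>Q. f U)"
  shows "\<exists>P'. partition_on A P' \<and> card P' \<le> card P * m \<and>
    (\<Sum>T\<in>P. f T) + (\<Sum>T\<in>P. g T) \<le> (\<Sum>U\<in>P'. f U)"
proof -
  obtain Q where Q: "\<And>T. T \<in> P \<Longrightarrow>
      partition_on T (Q T) \<and> finite (Q T) \<and> card (Q T) \<le> m \<and> f T + g T \<le> (\<Sum>U\<in>Q T. f U)"
    using refine by metis
  have "partition_on A (\<Union>T\<in>P. Q T)" "disjoint_family_on Q P"
    using partition_on_UN_refine[OF P(1)] disjoint_family_on_refine[OF P(1)] Q by blast+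
  moreover have "card (\<Union>T\<in>P. Q T) \<le> card P * m"
  proof -
    have "card (\<Union>T\<in>P. Q T) \<le> (\<Sum>T\<in>P. card (Q T))"
      by (rule card_UN_le[OF P(2)])
    also have "\<dots> \<le> card P * m"
      using Q sum_bounded_above[of P "\<lambda>T. card (Q T)" m] by simp
    finally show ?thesis .
  qed
  moreover have "(\<Sum>T\<in>P. f T) + (\<Sum>T\<in>P. g T) \<le> (\<Sum>U\<in>(\<Union>T\<in>P. Q T). f U)"
  proof -
    have "(\<Sum>T\<in>P. f T) + (\<Sum>T\<in>P. g T) \<le> (\<Sum>T\<in>P. \<Sum>U\<in>Q T. f U)"
      unfolding sum.distrib[symmetric] using Q by (intro sum_mono) blast
    also have "\<dots> = (\<Sum>U\<in>(\<Union>T\<in>P. Q T). f U)"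
      using \<open>disjoint_family_on Q P\<close> Q P(2) by (simp add: sum.UNION_disjoint_family)
    finally show ?thesis .
  qed
  ultimately show ?thesis by blast
qed

lemma finite_config: "finite (config n :: (nat \<Rightarrow> 'a::finite) set)"
  unfolding config_def by (simp add: finite_PiE)

lemma config_nonempty: "config n \<noteq> {}"
  by (simp add: config_def PiE_eq_empty_iff)

definition cylinder :: "(nat \<Rightarrow> nat) \<Rightarrow> nat \<Rightarrow> (nat \<Rightarrow> 'a) \<Rightarrow> (nat \<Rightarrow> 'a) set" where
  "cylinder xs j \<tau> = {\<sigma>. \<forall>i<j. \<sigma> (xs i) = \<tau> i}"

definition slice_mass :: "(nat \<Rightarrow> 'a) pmf \<Rightarrow> (nat \<Rightarrow> 'a) set \<Rightarrow> nat \<Rightarrow> 'a \<Rightarrow> real" where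
  "slice_mass \<mu> S x \<omega> = measure_pmf.prob \<mu> (S \<inter> {\<sigma>. \<sigma> x = \<omega>})"

lemma cylinder_0 [simp]: "cylinder xs 0 \<tau> = UNIV"
  by (simp add: cylinder_def)

lemma cylinder_Suc: "cylinder xs (Suc j) (\<tau>(j:=\<omega>)) = cylinder xs j \<tau> \<inter> {\<sigma>. \<sigma> (xs j) = \<omega>}"
  unfolding cylinder_def by (auto simp: less_Suc_eq)

lemma cylinder_upd_eq: "cylinder (xs(j := y)) j \<tau> = cylinder xs j \<tau>"
  by (auto simp: cylinder_def)

lemma disjoint_family_on_cylinder:
  "disjoint_family_on (\<lambda>\<tau>. S \<inter> cylinder xs j \<tau>) (PiE {..<j} (\<lambda>_. UNIV))"
proof (unfold disjoint_family_on_def, intro ballI impI)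
  fix \<tau> \<tau>' :: "nat \<Rightarrow> 'a"
  assume \<tau>: "\<tau> \<in> PiE {..<j} (\<lambda>_. UNIV)" "\<tau>' \<in> PiE {..<j} (\<lambda>_. UNIV)" "\<tau> \<noteq> \<tau>'"
  then obtain i where "\<tau> i \<noteq> \<tau>' i"
    by (auto simp: fun_eq_iff)
  moreover from \<tau> have "i < j"
    using calculation by (auto simp: PiE_def extensional_def)
  ultimately show "S \<inter> cylinder xs j \<tau> \<inter> (S \<inter> cylinder xs j \<tau>') = {}"
    by (auto simp: cylinder_def)
qed

lemma UN_cylinder: "(\<Union>\<tau>\<in>PiE {..<j} (\<lambda>_. UNIV). S \<inter> cylinder xs j \<tau>) = S"
proof (intro equalityI subsetI)
  fix \<sigma> assume "\<sigma> \<in> S"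
  then have "\<sigma> \<in> S \<inter> cylinder xs j (restrict (\<lambda>i. \<sigma> (xs i)) {..<j})"
    by (auto simp: cylinder_def)
  moreover have "restrict (\<lambda>i. \<sigma> (xs i)) {..<j} \<in> PiE {..<j} (\<lambda>_. UNIV)"
    by simp
  ultimately show "\<sigma> \<in> (\<Union>\<tau>\<in>PiE {..<j} (\<lambda>_. UNIV). S \<inter> cylinder xs j \<tau>)"
    by blast
qed blast

lemma slice_mass_nonneg: "slice_mass \<mu> S x \<omega> \<ge> 0"
  by (simp add: slice_mass_def)

lemma slice_mass_le: "slice_mass \<mu> S x \<omega> \<le> measure_pmf.prob \<mu> S"
  unfolding slice_mass_def by (rule measure_pmf.finite_measure_mono) auto

lemma sum_slice_mass: "(\<Sum>\<omega>\<in>UNIV. slice_mass \<mu> S x (\<omega>::'a::finite)) = measure_pmf.prob \<mu> S"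
proof -
  have "(\<Sum>\<omega>\<in>UNIV. slice_mass \<mu> S x \<omega>) = measure_pmf.prob \<mu> (\<Union>\<omega>\<in>UNIV. S \<inter> {\<sigma>. \<sigma> x = \<omega>})"
    unfolding slice_mass_def by (rule prob_disjoint_UN[symmetric]) (auto simp: disjoint_family_on_def)
  also have "(\<Union>\<omega>\<in>UNIV. S \<inter> {\<sigma>. \<sigma> x = \<omega>}) = S"
    by blast
  finally show ?thesis .
qed

lemma slice_mass_UN:
  assumes "finite I" "disjoint_family_on A I"
  shows "slice_mass \<mu> (\<Union>i\<in>I. A i) x \<omega> = (\<Sum>i\<in>I. slice_mass \<mu> (A i) x \<omega>)"
  unfolding slice_mass_def using assms
  by (subst prob_disjoint_UN[symmetric]) (auto simp: disjoint_family_on_def)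

lemma pmf_joint_marg:
  assumes "measure_pmf.prob \<mu> S > 0"
  shows "pmf (joint_marg \<mu> S k xs) a =
    (if a \<in> PiE {..<k} (\<lambda>_. UNIV)
     then measure_pmf.prob \<mu> (S \<inter> cylinder xs k a) / measure_pmf.prob \<mu> S else 0)"
proof -
  have "(\<lambda>\<sigma>. restrict (\<lambda>j. \<sigma> (xs j)) {..<k}) -` {a} =
      (if a \<in> PiE {..<k} (\<lambda>_. UNIV) then cylinder xs k a else {})"
    by (auto simp: cylinder_def PiE_def extensional_def fun_eq_iff)
  then show ?thesis
    unfolding joint_marg_def pmf_map measure_cond_pmf[OF assms] by (simp add: Int_commute)
qed

lemma pmf_marg:
  assumes "measure_pmf.prob \<mu> S > 0"
  shows "pmf (marg \<mu> S x) \<omega> = slice_mass \<mu> S x \<omega> / measure_pmf.prob \<mu> S"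
  unfolding marg_def pmf_map measure_cond_pmf[OF assms] slice_mass_def
  by (simp add: Int_commute vimage_def)

lemma pmf_prod_marg:
  assumes "measure_pmf.prob \<mu> S > 0"
  shows "pmf (prod_marg \<mu> S k xs) a =
    (if a \<in> PiE {..<k} (\<lambda>_. UNIV)
     then (\<Prod>i<k. slice_mass \<mu> S (xs i) (a i) / measure_pmf.prob \<mu> S) else 0)"
  unfolding prod_marg_def
  by (subst pmf_Pi) (auto simp: pmf_marg[OF assms] PiE_def extensional_def)

section \<open>Non-states have large discrepancy\<close>

text \<open>Up to the factor \<open>\<mu>(S)\<close>, the L1 distance between the law of \<open>\<sigma> x\<close> under \<open>\<mu>[\<cdot>|S]\<close>
  and its law given, in addition, the values of \<open>\<sigma>\<close> at \<open>xs 0, \<dots>, xs (j - 1)\<close>, averaged over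
  these values.\<close>

definition discrepancy :: "(nat \<Rightarrow> 'a::finite) pmf \<Rightarrow> (nat \<Rightarrow> 'a) set \<Rightarrow> (nat \<Rightarrow> nat) \<Rightarrow> nat \<Rightarrow> nat \<Rightarrow> real"
  where "discrepancy \<mu> S xs j x = (\<Sum>\<tau>\<in>PiE {..<j} (\<lambda>_. UNIV). \<Sum>\<omega>\<in>UNIV.
      \<bar>slice_mass \<mu> (S \<inter> cylinder xs j \<tau>) x \<omega>
        - measure_pmf.prob \<mu> (S \<inter> cylinder xs j \<tau>) * slice_mass \<mu> S x \<omega> / measure_pmf.prob \<mu> S\<bar>)"

lemma discrepancy_upd_eq: "discrepancy \<mu> S (xs(j := y)) j x = discrepancy \<mu> S xs j x"
  by (simp add: discrepancy_def cylinder_upd_eq)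

lemma tv_joint_prod_marg_le_discrepancy:
  fixes \<mu> :: "(nat \<Rightarrow> 'a::finite) pmf"
  assumes pos: "measure_pmf.prob \<mu> S > 0"
  shows "tv_dist (joint_marg \<mu> S k xs) (prod_marg \<mu> S k xs)
     \<le> (\<Sum>j<k. discrepancy \<mu> S xs j (xs j)) / (2 * measure_pmf.prob \<mu> S)"
proof -
  define m where "m = measure_pmf.prob \<mu> S"
  have m: "m > 0" using pos m_def by simp
  define J where "J j \<tau> = measure_pmf.prob \<mu> (S \<inter> cylinder xs j \<tau>) / m" for j \<tau>
  define p where "p i \<omega> = slice_mass \<mu> S (xs i) \<omega> / m" for i \<omega>
  have tv: "tv_dist (joint_marg \<mu> S k xs) (prod_marg \<mu> S k xs) =
     (1/2) * (\<Sum>a\<in>PiE {..<k} (\<lambda>_. UNIV). \<bar>J k a - (\<Prod>i<k. p i (a i))\<bar>)"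
    by (subst tv_dist_finite_support[where F="PiE {..<k} (\<lambda>_. UNIV)"])
       (simp_all add: finite_PiE pmf_joint_marg[OF pos] pmf_prod_marg[OF pos] J_def p_def m_def)
  have p_sum: "(\<Sum>\<omega>\<in>UNIV. p i \<omega>) = 1" for i
    using m by (simp add: p_def sum_divide_distrib[symmetric] sum_slice_mass m_def)
  have p_nonneg: "p i \<omega> \<ge> 0" for i \<omega>
    using m by (simp add: p_def slice_mass_nonneg)
  have J_0: "J 0 \<tau> = 1" for \<tau>
    using m by (simp add: J_def m_def)
  have increment: "\<bar>J (Suc j) (\<tau>(j:=\<omega>)) - J j \<tau> * p j \<omega>\<bar> =
     \<bar>slice_mass \<mu> (S \<inter> cylinder xs j \<tau>) (xs j) \<omega>
        - measure_pmf.prob \<mu> (S \<inter> cylinder xs j \<tau>) * slice_mass \<mu> S (xs j) \<omega> / m\<bar> / m"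
    for j \<tau> \<omega>
  proof -
    have "J (Suc j) (\<tau>(j:=\<omega>)) - J j \<tau> * p j \<omega> =
      (slice_mass \<mu> (S \<inter> cylinder xs j \<tau>) (xs j) \<omega>
        - measure_pmf.prob \<mu> (S \<inter> cylinder xs j \<tau>) * slice_mass \<mu> S (xs j) \<omega> / m) / m"
      using m by (simp add: J_def p_def cylinder_Suc slice_mass_def Int_assoc field_simps)
    then show ?thesis using m by simp
  qed
  have "tv_dist (joint_marg \<mu> S k xs) (prod_marg \<mu> S k xs) \<le> (1/2) *
     (\<Sum>j<k. \<Sum>\<tau>\<in>PiE {..<j} (\<lambda>_. UNIV). \<Sum>\<omega>\<in>UNIV. \<bar>J (Suc j) (\<tau>(j:=\<omega>)) - J j \<tau> * p j \<omega>\<bar>)"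
    unfolding tv using hybrid_bound[of p J k, OF p_sum p_nonneg J_0] by simp
  also have "\<dots> = (\<Sum>j<k. discrepancy \<mu> S xs j (xs j)) / (2 * m)"
    by (simp add: increment discrepancy_def sum_divide_distrib[symmetric] m_def)
  finally show ?thesis by (simp add: m_def)
qed

lemma exists_large_discrepancy:
  fixes \<mu> :: "(nat \<Rightarrow> 'a::finite) pmf"
  assumes pos: "measure_pmf.prob \<mu> S > 0" and "n > 0" "k > 0"
    and not_state: "\<not> is_state eps k n \<mu> S"
  shows "\<exists>xs j. j < k \<and>
    2 * measure_pmf.prob \<mu> S * real n * eps / real k \<le> (\<Sum>x<n. discrepancy \<mu> S xs j x)"
proof (rule ccontr)
  let ?P = "PiE {..<k} (\<lambda>_. {..<n::nat})"
  define m where "m = measure_pmf.prob \<mu> S"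
  have m: "m > 0" using pos m_def by simp
  define c where "c = 2 * m * real n * eps / real k"
  assume "\<not> ?thesis"
  then have small: "(\<Sum>x<n. discrepancy \<mu> S xs j x) < c" if "j < k" for xs j
    using that by (auto simp: c_def m_def not_le)
  have "eps * real n ^ k \<le> (\<Sum>xs\<in>?P. tv_dist (joint_marg \<mu> S k xs) (prod_marg \<mu> S k xs))"
    using not_state pos \<open>n > 0\<close> by (simp add: is_state_def field_simps)
  also have "\<dots> \<le> (\<Sum>xs\<in>?P. (\<Sum>j<k. discrepancy \<mu> S xs j (xs j)) / (2 * m))"
    unfolding m_def by (intro sum_mono tv_joint_prod_marg_le_discrepancy pos)
  also have "\<dots> = (\<Sum>j<k. \<Sum>xs\<in>?P. discrepancy \<mu> S xs j (xs j)) / (2 * m)"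
    by (simp add: sum_divide_distrib[symmetric] sum.swap[of _ ?P])
  also have "\<dots> = (\<Sum>j<k. \<Sum>xs\<in>?P. \<Sum>x<n. discrepancy \<mu> S xs j x) / (2 * m * real n)"
  proof -
    have "(\<Sum>xs\<in>?P. discrepancy \<mu> S xs j (xs j)) = (\<Sum>xs\<in>?P. \<Sum>x<n. discrepancy \<mu> S xs j x) / real n"
      if "j < k" for j
      using sum_PiE_eval_coordinate[of j k "\<lambda>xs x. discrepancy \<mu> S xs j x" n, OF that discrepancy_upd_eq] \<open>n > 0\<close> by (simp add: field_simps)
    then have "(\<Sum>j<k. \<Sum>xs\<in>?P. discrepancy \<mu> S xs j (xs j))
        = (\<Sum>j<k. \<Sum>xs\<in>?P. \<Sum>x<n. discrepancy \<mu> S xs j x) / real n"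
      by (simp add: sum_divide_distrib)
    then show ?thesis
      by (simp add: divide_divide_eq_left mult_ac)
  qed
  also have "\<dots> < (\<Sum>j<k. \<Sum>xs\<in>?P. c) / (2 * m * real n)"
    using m \<open>n > 0\<close> \<open>k > 0\<close> small
    by (intro divide_strict_right_mono sum_strict_mono) (auto simp: finite_PiE PiE_eq_empty_iff)
  also have "\<dots> = eps * real n ^ k"
    using m \<open>n > 0\<close> \<open>k > 0\<close> by (simp add: card_PiE c_def field_simps)
  finally show False by simp
qed

section \<open>Energy increment\<close>

definition energy :: "nat \<Rightarrow> (nat \<Rightarrow> 'a::finite) pmf \<Rightarrow> (nat \<Rightarrow> 'a) set \<Rightarrow> real" where
  "energy n \<mu> S = (\<Sum>x<n. \<Sum>\<omega>\<in>UNIV. (slice_mass \<mu> S x \<omega>)\<^sup>2) / measure_pmf.prob \<mu> S"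

lemma energy_empty [simp]: "energy n \<mu> {} = 0"
  by (simp add: energy_def)

lemma energy_nonneg: "energy n \<mu> S \<ge> 0"
  unfolding energy_def by (intro divide_nonneg_nonneg sum_nonneg) auto

lemma energy_le: "energy n \<mu> S \<le> real n * measure_pmf.prob \<mu> S"
proof -
  define m where "m = measure_pmf.prob \<mu> S"
  have "(\<Sum>\<omega>\<in>UNIV. (slice_mass \<mu> S x \<omega>)\<^sup>2) \<le> (\<Sum>\<omega>\<in>UNIV. slice_mass \<mu> S x \<omega> * m)" for x
    by (intro sum_mono)
       (auto simp: power2_eq_square m_def slice_mass_nonneg slice_mass_le intro!: mult_left_mono)
  also have "(\<Sum>\<omega>\<in>UNIV. slice_mass \<mu> S x \<omega> * m) = m * m" for x
    by (simp add: sum_distrib_right[symmetric] sum_slice_mass m_def)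
  finally have "(\<Sum>x<n. \<Sum>\<omega>\<in>UNIV. (slice_mass \<mu> S x \<omega>)\<^sup>2) \<le> real n * (m * m)"
    using sum_mono[of "{..<n}" _ "\<lambda>_. m * m"] by simp
  then show ?thesis
    unfolding energy_def m_def[symmetric]
    by (cases "m = 0") (auto simp: m_def divide_le_eq)
qed

lemma energy_increment:
  fixes \<mu> :: "(nat \<Rightarrow> 'a::finite) pmf"
  assumes fin: "finite I" and disj: "disjoint_family_on A I" and S: "(\<Union>i\<in>I. A i) = S"
    and pos: "measure_pmf.prob \<mu> S > 0" and "n > 0"
  shows "(\<Sum>x<n. \<Sum>\<omega>\<in>UNIV. \<Sum>i\<in>I. \<bar>slice_mass \<mu> (A i) x \<omega>
            - measure_pmf.prob \<mu> (A i) * slice_mass \<mu> S x \<omega> / measure_pmf.prob \<mu> S\<bar>)\<^sup>2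
       / (real n * real CARD('a) * measure_pmf.prob \<mu> S)
     \<le> (\<Sum>i\<in>I. energy n \<mu> (A i)) - energy n \<mu> S"
proof -
  define m where "m = measure_pmf.prob \<mu> S"
  have m: "m > 0" using pos m_def by simp
  define B where "B x \<omega> = (\<Sum>i\<in>I. \<bar>slice_mass \<mu> (A i) x \<omega>
      - measure_pmf.prob \<mu> (A i) * slice_mass \<mu> S x \<omega> / m\<bar>)" for x \<omega>
  let ?X = "{..<n} \<times> (UNIV::'a set)"
  have mass_sum: "(\<Sum>i\<in>I. measure_pmf.prob \<mu> (A i)) = m"
    unfolding m_def S[symmetric] by (rule prob_disjoint_UN[symmetric, OF fin disj])
  have slice_sum: "(\<Sum>i\<in>I. slice_mass \<mu> (A i) x \<omega>) = slice_mass \<mu> S x \<omega>" for x \<omega>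
    unfolding S[symmetric] by (rule slice_mass_UN[symmetric, OF fin disj])
  have pointwise: "(B x \<omega>)\<^sup>2 / m \<le>
      (\<Sum>i\<in>I. (slice_mass \<mu> (A i) x \<omega>)\<^sup>2 / measure_pmf.prob \<mu> (A i)) - (slice_mass \<mu> S x \<omega>)\<^sup>2 / m"
    for x \<omega>
    using sum_abs_deviation_sq_le[where I=I and g="\<lambda>i. slice_mass \<mu> (A i) x \<omega>" and w="\<lambda>i. measure_pmf.prob \<mu> (A i)"] m
    by (simp add: slice_mass_nonneg slice_mass_le mass_sum slice_sum B_def)
  have "(\<Sum>i\<in>I. energy n \<mu> (A i)) - energy n \<mu> S = (\<Sum>(x,\<omega>)\<in>?X.
      (\<Sum>i\<in>I. (slice_mass \<mu> (A i) x \<omega>)\<^sup>2 / measure_pmf.prob \<mu> (A i)) - (slice_mass \<mu> S x \<omega>)\<^sup>2 / m)"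
    unfolding energy_def m_def[symmetric] sum.cartesian_product[symmetric]
    by (simp add: sum_subtractf sum_divide_distrib sum.swap[of _ I])
  also have "\<dots> \<ge> (\<Sum>(x,\<omega>)\<in>?X. (B x \<omega>)\<^sup>2 / m)"
    by (intro sum_mono) (use pointwise in auto)
  finally have energy_gain: "(\<Sum>(x,\<omega>)\<in>?X. (B x \<omega>)\<^sup>2) / m \<le> (\<Sum>i\<in>I. energy n \<mu> (A i)) - energy n \<mu> S"
    by (simp add: sum_divide_distrib case_prod_beta)
  have "(\<Sum>(x,\<omega>)\<in>?X. B x \<omega>)\<^sup>2 \<le> real n * real CARD('a) * (\<Sum>(x,\<omega>)\<in>?X. (B x \<omega>)\<^sup>2)"
    using Cauchy_Schwarz_ineq_sum[of "\<lambda>_. 1" "\<lambda>p. B (fst p) (snd p)" ?X]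
    by (simp add: case_prod_beta card_cartesian_product)
  moreover have "real n * real CARD('a) > 0"
    using \<open>n > 0\<close> by simp
  ultimately have "(\<Sum>(x,\<omega>)\<in>?X. B x \<omega>)\<^sup>2 / (real n * real CARD('a) * m) \<le> (\<Sum>(x,\<omega>)\<in>?X. (B x \<omega>)\<^sup>2) / m"
    using m by (simp add: divide_le_eq field_simps)
  with energy_gain show ?thesis
    unfolding m_def[symmetric] B_def[symmetric] sum.cartesian_product[symmetric] by simp
qed

lemma energy_gain_of_nonstate:
  fixes \<mu> :: "(nat \<Rightarrow> 'a::finite) pmf"
  assumes "n > 0" "k > 0" "eps > 0" and not_state: "\<not> is_state eps k n \<mu> S"
  shows "\<exists>xs j. j < k \<and> energy n \<mu> S + 4 * eps\<^sup>2 / (real k ^ 2 * real CARD('a)) * real n * measure_pmf.prob \<mu> S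
     \<le> (\<Sum>\<tau>\<in>PiE {..<j} (\<lambda>_. UNIV). energy n \<mu> (S \<inter> cylinder xs j \<tau>))"
proof (cases "measure_pmf.prob \<mu> S > 0")
  case False
  then have "measure_pmf.prob \<mu> S = 0"
    by (simp add: less_le)
  moreover from this have "energy n \<mu> S = 0"
    by (simp add: energy_def)
  ultimately have "energy n \<mu> S + 4 * eps\<^sup>2 / (real k ^ 2 * real CARD('a)) * real n * measure_pmf.prob \<mu> S
      \<le> (\<Sum>\<tau>\<in>PiE {..<0} (\<lambda>_. UNIV). energy n \<mu> (S \<inter> cylinder xs 0 \<tau>))" for xs
    by (simp add: sum_nonneg energy_nonneg)
  then show ?thesis
    using \<open>k > 0\<close> by blast
next
  case pos: True
  define m where "m = measure_pmf.prob \<mu> S"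
  have m: "m > 0" using pos m_def by simp
  obtain xs j where "j < k" and large: "2 * m * real n * eps / real k \<le> (\<Sum>x<n. discrepancy \<mu> S xs j x)"
    using exists_large_discrepancy[OF pos assms(1,2) not_state] unfolding m_def by blast
  have split_sum: "(\<Sum>x<n. discrepancy \<mu> S xs j x) = (\<Sum>x<n. \<Sum>\<omega>\<in>UNIV. \<Sum>\<tau>\<in>PiE {..<j} (\<lambda>_. UNIV).
      \<bar>slice_mass \<mu> (S \<inter> cylinder xs j \<tau>) x \<omega>
        - measure_pmf.prob \<mu> (S \<inter> cylinder xs j \<tau>) * slice_mass \<mu> S x \<omega> / m\<bar>)"
    unfolding discrepancy_def m_def by (intro sum.cong refl) (rule sum.swap)
  have "4 * eps\<^sup>2 / (real k ^ 2 * real CARD('a)) * real n * m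
      = (2 * m * real n * eps / real k)\<^sup>2 / (real n * real CARD('a) * m)"
    using m \<open>n > 0\<close> \<open>k > 0\<close> by (simp add: field_simps power2_eq_square)
  also have "\<dots> \<le> (\<Sum>x<n. discrepancy \<mu> S xs j x)\<^sup>2 / (real n * real CARD('a) * m)"
    using large m \<open>eps > 0\<close> \<open>n > 0\<close> by (intro divide_right_mono power_mono) auto
  also have "\<dots> \<le> (\<Sum>\<tau>\<in>PiE {..<j} (\<lambda>_. UNIV). energy n \<mu> (S \<inter> cylinder xs j \<tau>)) - energy n \<mu> S"
    unfolding split_sum m_def
    by (rule energy_increment[OF _ disjoint_family_on_cylinder UN_cylinder pos \<open>n > 0\<close>])
       (simp add: finite_PiE)
  finally show ?thesis
    using \<open>j < k\<close> unfolding m_def by (intro exI[of _ xs] exI[of _ j]) simp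
qed

lemma sum_energy_partition_le:
  assumes "partition_on A P" "finite P" "set_pmf \<mu> \<subseteq> A"
  shows "(\<Sum>T\<in>P. energy n \<mu> T) \<le> real n"
proof -
  have "(\<Sum>T\<in>P. energy n \<mu> T) \<le> (\<Sum>T\<in>P. real n * measure_pmf.prob \<mu> T)"
    by (intro sum_mono energy_le)
  also have "\<dots> = real n * measure_pmf.prob \<mu> A"
    using prob_partition[OF assms(1,2)] by (simp add: sum_distrib_left)
  finally show ?thesis
    using prob_eq_1_if_set_pmf_subset[OF assms(3)] by simp
qed

lemma cylinder_refinement:
  fixes S :: "(nat \<Rightarrow> 'a::finite) set" and xs :: "nat \<Rightarrow> nat" and j :: nat
  defines "Q \<equiv> (\<lambda>\<tau>. S \<inter> cylinder xs j \<tau>) ` PiE {..<j} (\<lambda>_. UNIV) - {{}}"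
  shows "partition_on S Q" "finite Q" "card Q \<le> CARD('a) ^ j"
    "(\<Sum>U\<in>Q. energy n \<mu> U) = (\<Sum>\<tau>\<in>PiE {..<j} (\<lambda>_. UNIV). energy n \<mu> (S \<inter> cylinder xs j \<tau>))"
proof -
  show "partition_on S Q"
    unfolding Q_def by (rule partition_on_disjoint_family[OF disjoint_family_on_cylinder UN_cylinder])
  show "finite Q"
    unfolding Q_def by (simp add: finite_PiE)
  have "card Q \<le> card (PiE {..<j} (\<lambda>_. UNIV :: 'a set))"
    unfolding Q_def by (meson card_Diff1_le card_image_le finite_PiE finite order_trans finite_lessThan)
  then show "card Q \<le> CARD('a) ^ j"
    by (simp add: card_PiE)
  show "(\<Sum>U\<in>Q. energy n \<mu> U) = (\<Sum>\<tau>\<in>PiE {..<j} (\<lambda>_. UNIV). energy n \<mu> (S \<inter> cylinder xs j \<tau>))"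
    unfolding Q_def by (rule sum_image_diff_empty) (simp_all add: finite_PiE disjoint_family_on_cylinder)
qed

lemma nonstate_refinement:
  fixes \<mu> :: "(nat \<Rightarrow> 'a::finite) pmf"
  assumes "n > 0" "k > 0" "eps > 0" "\<not> is_state eps k n \<mu> S"
  shows "\<exists>Q. partition_on S Q \<and> finite Q \<and> card Q \<le> CARD('a) ^ k \<and>
    energy n \<mu> S + 4 * eps\<^sup>2 / (real k ^ 2 * real CARD('a)) * real n * measure_pmf.prob \<mu> S
      \<le> (\<Sum>U\<in>Q. energy n \<mu> U)"
proof -
  obtain xs j where "j < k" and gain: "energy n \<mu> S + 4 * eps\<^sup>2 / (real k ^ 2 * real CARD('a)) * real n
      * measure_pmf.prob \<mu> S \<le> (\<Sum>\<tau>\<in>PiE {..<j} (\<lambda>_. UNIV). energy n \<mu> (S \<inter> cylinder xs j \<tau>))"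
    using energy_gain_of_nonstate[OF assms] by blast
  define Q where "Q = (\<lambda>\<tau>. S \<inter> cylinder xs j \<tau>) ` PiE {..<j} (\<lambda>_. UNIV) - {{}}"
  have Q: "partition_on S Q" "finite Q" "card Q \<le> CARD('a) ^ j"
    "(\<Sum>U\<in>Q. energy n \<mu> U) = (\<Sum>\<tau>\<in>PiE {..<j} (\<lambda>_. UNIV). energy n \<mu> (S \<inter> cylinder xs j \<tau>))"
    unfolding Q_def by (rule cylinder_refinement)+
  have "CARD('a) ^ j \<le> CARD('a) ^ k"
    using \<open>j < k\<close> by (intro power_increasing) auto
  then have "card Q \<le> CARD('a) ^ k"
    using Q(3) by linarith
  then show ?thesis
    using Q gain by auto
qed

section \<open>Partitions into large states\<close>

definition nonstate_mass :: "real \<Rightarrow> nat \<Rightarrow> nat \<Rightarrow> (nat \<Rightarrow> 'a) pmf \<Rightarrow> (nat \<Rightarrow> 'a) set set \<Rightarrow> real" where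
  "nonstate_mass eps k n \<mu> P = (\<Sum>T\<in>{T\<in>P. \<not> is_state eps k n \<mu> T}. measure_pmf.prob \<mu> T)"

lemma refinement_step:
  fixes \<mu> :: "(nat \<Rightarrow> 'a::finite) pmf"
  assumes P: "partition_on (config n) P" and "n > 0" "k > 0" "eps > 0"
  shows "\<exists>P'. partition_on (config n) P' \<and> card P' \<le> card P * CARD('a) ^ k \<and>
    (\<Sum>T\<in>P. energy n \<mu> T) + 4 * eps\<^sup>2 / (real k ^ 2 * real CARD('a)) * real n * nonstate_mass eps k n \<mu> P
      \<le> (\<Sum>T\<in>P'. energy n \<mu> T)"
proof -
  let ?c = "4 * eps\<^sup>2 / (real k ^ 2 * real CARD('a)) * real n"
  let ?g = "\<lambda>T. if is_state eps k n \<mu> T then 0 else ?c * measure_pmf.prob \<mu> T"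
  have "\<exists>Q. partition_on T Q \<and> finite Q \<and> card Q \<le> CARD('a) ^ k \<and> energy n \<mu> T + ?g T \<le> (\<Sum>U\<in>Q. energy n \<mu> U)"
    if "T \<in> P" for T
  proof (cases "is_state eps k n \<mu> T")
    case True
    have "partition_on T {T}"
      using P that by (intro partition_on_space) (auto simp: partition_on_def)
    then show ?thesis
      using True by (intro exI[of _ "{T}"]) simp
  next
    case False
    then show ?thesis
      using nonstate_refinement[OF \<open>n > 0\<close> \<open>k > 0\<close> \<open>eps > 0\<close>, of \<mu> T] by simp
  qed
  then have "\<exists>P'. partition_on (config n) P' \<and> card P' \<le> card P * CARD('a) ^ k \<and>
    (\<Sum>T\<in>P. energy n \<mu> T) + (\<Sum>T\<in>P. ?g T) \<le> (\<Sum>T\<in>P'. energy n \<mu> T)"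
    by (rule refine_partition[OF P finite_elements[OF finite_config P]])
  moreover have "(\<Sum>T\<in>P. ?g T) = ?c * nonstate_mass eps k n \<mu> P"
    unfolding nonstate_mass_def sum_distrib_left
    by (subst sum.inter_filter[OF finite_elements[OF finite_config P]]) (auto intro: sum.cong)
  ultimately show ?thesis
    by simp
qed

lemma iterated_refinement:
  fixes \<mu> :: "(nat \<Rightarrow> 'a::finite) pmf"
  assumes "partition_on (config n) P" and "n > 0" "k > 0" "eps > 0"
  shows "\<exists>P'. partition_on (config n) P' \<and> card P' \<le> card P * (CARD('a) ^ k) ^ r \<and>
    (nonstate_mass eps k n \<mu> P' < eps / 2 \<or>
     (\<Sum>T\<in>P. energy n \<mu> T) + real r * (2 * eps ^ 3 / (real k ^ 2 * real CARD('a))) * real n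
       \<le> (\<Sum>T\<in>P'. energy n \<mu> T))"
  using assms(1)
proof (induction r arbitrary: P)
  case 0
  then show ?case by auto
next
  case (Suc r)
  define \<delta> where "\<delta> = 2 * eps ^ 3 / (real k ^ 2 * real CARD('a))"
  have K: "1 \<le> (CARD('a) ^ k) ^ Suc r" by simp
  show ?case
  proof (cases "nonstate_mass eps k n \<mu> P < eps / 2")
    case True
    then show ?thesis
      using Suc.prems K by (intro exI[of _ P]) simp
  next
    case False
    obtain P1 where P1: "partition_on (config n) P1" "card P1 \<le> card P * CARD('a) ^ k"
      and gain: "(\<Sum>T\<in>P. energy n \<mu> T) + 4 * eps\<^sup>2 / (real k ^ 2 * real CARD('a)) * real n
        * nonstate_mass eps k n \<mu> P \<le> (\<Sum>T\<in>P1. energy n \<mu> T)"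
      using refinement_step[OF Suc.prems assms(2-4)] by blast
    have "\<delta> * real n \<le> 4 * eps\<^sup>2 / (real k ^ 2 * real CARD('a)) * real n * nonstate_mass eps k n \<mu> P"
    proof -
      have "\<delta> = 4 * eps\<^sup>2 / (real k ^ 2 * real CARD('a)) * (eps / 2)"
        by (simp add: \<delta>_def power2_eq_square power3_eq_cube)
      moreover have "4 * eps\<^sup>2 / (real k ^ 2 * real CARD('a)) * real n * (eps / 2)
          \<le> 4 * eps\<^sup>2 / (real k ^ 2 * real CARD('a)) * real n * nonstate_mass eps k n \<mu> P"
        using False by (intro mult_left_mono) auto
      ultimately show ?thesis
        by (simp add: mult_ac)
    qed
    with gain have gain1: "(\<Sum>T\<in>P. energy n \<mu> T) + \<delta> * real n \<le> (\<Sum>T\<in>P1. energy n \<mu> T)"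
      by linarith
    obtain P' where P': "partition_on (config n) P'" "card P' \<le> card P1 * (CARD('a) ^ k) ^ r"
      and alt: "nonstate_mass eps k n \<mu> P' < eps / 2 \<or>
        (\<Sum>T\<in>P1. energy n \<mu> T) + real r * \<delta> * real n \<le> (\<Sum>T\<in>P'. energy n \<mu> T)"
      using Suc.IH[OF P1(1)] unfolding \<delta>_def by blast
    have "card P' \<le> card P * CARD('a) ^ k * (CARD('a) ^ k) ^ r"
      using P'(2) P1(2) by (meson le_trans mult_le_mono1)
    then have "card P' \<le> card P * (CARD('a) ^ k) ^ Suc r"
      by (simp add: mult.assoc)
    moreover have "nonstate_mass eps k n \<mu> P' < eps / 2 \<or>
        (\<Sum>T\<in>P. energy n \<mu> T) + real (Suc r) * \<delta> * real n \<le> (\<Sum>T\<in>P'. energy n \<mu> T)"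
      using alt gain1 by (auto simp: algebra_simps)
    ultimately show ?thesis
      using P'(1) unfolding \<delta>_def by blast
  qed
qed

lemma bounded_partition_into_states:
  assumes "eps > 0" "k > 0"
  shows "\<exists>K > 0. \<forall>n > 0. \<forall>\<mu> :: (nat \<Rightarrow> 'a::finite) pmf. set_pmf \<mu> \<subseteq> config n \<longrightarrow>
    (\<exists>P. partition_on (config n) P \<and> card P \<le> K \<and> nonstate_mass eps k n \<mu> P < eps / 2)"
proof -
  define \<delta> where "\<delta> = 2 * eps ^ 3 / (real k ^ 2 * real CARD('a))"
  have "\<delta> > 0" using assms by (simp add: \<delta>_def)
  define r where "r = nat \<lceil>1 / \<delta>\<rceil> + 1"
  have "real r > 1 / \<delta>" unfolding r_def by linarith
  then have r: "real r * \<delta> > 1" using \<open>\<delta> > 0\<close> by (simp add: field_simps)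
  define K where "K = (CARD('a) ^ k) ^ r"
  have "K > 0" by (simp add: K_def)
  moreover have partition_exists: "\<exists>P. partition_on (config n) P \<and> card P \<le> K \<and> nonstate_mass eps k n \<mu> P < eps / 2"
    if "n > 0" and supp: "set_pmf \<mu> \<subseteq> config n" for n and \<mu> :: "(nat \<Rightarrow> 'a) pmf"
  proof -
    have P0: "partition_on (config n) {config n}"
      by (rule partition_on_space[OF config_nonempty])
    obtain P where P: "partition_on (config n) P" "card P \<le> K"
      and alt: "nonstate_mass eps k n \<mu> P < eps / 2 \<or>
        (\<Sum>T\<in>{config n}. energy n \<mu> T) + real r * \<delta> * real n \<le> (\<Sum>T\<in>P. energy n \<mu> T)"
      using iterated_refinement[OF P0 \<open>n > 0\<close> \<open>k > 0\<close> \<open>eps > 0\<close>, of r \<mu>] unfolding \<delta>_def K_def by auto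
    have "(\<Sum>T\<in>P. energy n \<mu> T) \<le> real n"
      using sum_energy_partition_le[OF P(1) finite_elements[OF finite_config P(1)] supp] .
    moreover have "real n < real r * \<delta> * real n"
      using r \<open>n > 0\<close> by simp
    ultimately have "nonstate_mass eps k n \<mu> P < eps / 2"
      using alt energy_nonneg[of n \<mu> "config n"] by auto
    then show ?thesis using P by blast
  qed
  ultimately show ?thesis
    by (intro exI[of _ K] conjI allI impI) simp_all
qed

lemma mass_of_large_states:
  assumes P: "partition_on (config n) P" and supp: "set_pmf \<mu> \<subseteq> config n"
    and "card P \<le> K" and nonstates: "nonstate_mass eps k n \<mu> P < eps / 2"
  shows "1 - eps \<le> (\<Sum>T\<in>{T\<in>P. is_state eps k n \<mu> T \<and> eps / (2 * real K) \<le> measure_pmf.prob \<mu> T}.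
    measure_pmf.prob \<mu> T)"
proof -
  define \<eta> where "\<eta> = eps / (2 * real K)"
  define G where "G = {T\<in>P. is_state eps k n \<mu> T \<and> \<eta> \<le> measure_pmf.prob \<mu> T}"
  define N where "N = {T\<in>P. \<not> is_state eps k n \<mu> T}"
  define Small where "Small = {T\<in>P. is_state eps k n \<mu> T \<and> measure_pmf.prob \<mu> T < \<eta>}"
  have "finite P" using finite_elements[OF finite_config P] .
  have "0 \<le> nonstate_mass eps k n \<mu> P"
    unfolding nonstate_mass_def by (rule sum_nonneg) simp
  then have "eps > 0"
    using nonstates by linarith
  have "P = G \<union> N \<union> Small" "G \<inter> N = {}" "(G \<union> N) \<inter> Small = {}"
    by (auto simp: G_def N_def Small_def)
  moreover have "finite G" "finite N" "finite Small"
    using \<open>finite P\<close> by (simp_all add: G_def N_def Small_def)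
  ultimately have "(\<Sum>T\<in>P. measure_pmf.prob \<mu> T) = (\<Sum>T\<in>G. measure_pmf.prob \<mu> T)
      + (\<Sum>T\<in>N. measure_pmf.prob \<mu> T) + (\<Sum>T\<in>Small. measure_pmf.prob \<mu> T)"
    by (simp add: sum.union_disjoint)
  moreover have "(\<Sum>T\<in>P. measure_pmf.prob \<mu> T) = 1"
    using prob_partition[OF P \<open>finite P\<close>] prob_eq_1_if_set_pmf_subset[OF supp] by simp
  moreover have "(\<Sum>T\<in>Small. measure_pmf.prob \<mu> T) \<le> eps / 2"
  proof -
    have "card Small \<le> K"
      using card_mono[OF \<open>finite P\<close>, of Small] \<open>card P \<le> K\<close> by (auto simp: Small_def)
    have "(\<Sum>T\<in>Small. measure_pmf.prob \<mu> T) \<le> real (card Small) * \<eta>"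
      by (rule sum_bounded_above) (simp add: Small_def)
    also have "\<dots> \<le> real K * \<eta>"
      using \<open>card Small \<le> K\<close> \<open>eps > 0\<close> by (intro mult_right_mono) (simp_all add: \<eta>_def)
    also have "\<dots> \<le> eps / 2"
      using \<open>eps > 0\<close> by (cases "K = 0") (simp_all add: \<eta>_def)
    finally show ?thesis .
  qed
  ultimately show ?thesis
    using nonstates unfolding nonstate_mass_def N_def[symmetric] G_def \<eta>_def by linarith
qed

lemma large_states_of_partition:
  fixes \<mu> :: "(nat \<Rightarrow> 'a::finite) pmf"
  assumes P: "partition_on (config n) P" and supp: "set_pmf \<mu> \<subseteq> config n"
    and "card P \<le> K" and "nonstate_mass eps k n \<mu> P < eps / 2"
  shows "\<exists>(N::nat) (S :: nat \<Rightarrow> (nat \<Rightarrow> 'a) set).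
    (\<forall>i<N. S i \<subseteq> config n \<and> is_state eps k n \<mu> (S i) \<and> measure_pmf.prob \<mu> (S i) \<ge> eps / (2 * real K)) \<and>
    (\<forall>i<N. \<forall>j<N. i \<noteq> j \<longrightarrow> S i \<inter> S j = {}) \<and> (\<Sum>i<N. measure_pmf.prob \<mu> (S i)) \<ge> 1 - eps"
proof -
  define G where "G = {T\<in>P. is_state eps k n \<mu> T \<and> eps / (2 * real K) \<le> measure_pmf.prob \<mu> T}"
  have "finite G"
    using finite_elements[OF finite_config P] by (simp add: G_def)
  then obtain S where S: "bij_betw S {..<card G} G"
    using ex_bij_betw_nat_finite[OF \<open>finite G\<close>] unfolding atLeast0LessThan by blast
  have "S i \<in> G" if "i < card G" for i
    using bij_betwE[OF S] that by blast
  then have S_G: "S i \<in> P" "is_state eps k n \<mu> (S i)" "eps / (2 * real K) \<le> measure_pmf.prob \<mu> (S i)"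
    if "i < card G" for i
    using that by (simp_all add: G_def)
  have S_config: "S i \<subseteq> config n" if "i < card G" for i
    using S_G(1)[OF that] partition_onD1[OF P] by blast
  have S_disjoint: "S i \<inter> S j = {}" if "i < card G" "j < card G" "i \<noteq> j" for i j
  proof -
    have "S i \<noteq> S j"
      using that bij_betw_imp_inj_on[OF S] by (auto simp: inj_on_def)
    then show ?thesis
      using disjointD[OF partition_onD2[OF P] S_G(1)[OF that(1)] S_G(1)[OF that(2)]] by simp
  qed
  have "1 - eps \<le> (\<Sum>T\<in>G. measure_pmf.prob \<mu> T)"
    using mass_of_large_states[OF assms] unfolding G_def .
  also have "\<dots> = (\<Sum>i<card G. measure_pmf.prob \<mu> (S i))"
    using sum.reindex_bij_betw[OF S, of "measure_pmf.prob \<mu>"] by simp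
  finally have "(\<forall>i<card G. S i \<subseteq> config n \<and> is_state eps k n \<mu> (S i)
        \<and> measure_pmf.prob \<mu> (S i) \<ge> eps / (2 * real K)) \<and>
      (\<forall>i<card G. \<forall>j<card G. i \<noteq> j \<longrightarrow> S i \<inter> S j = {}) \<and> (\<Sum>i<card G. measure_pmf.prob \<mu> (S i)) \<ge> 1 - eps"
    using S_G S_config S_disjoint by blast
  then show ?thesis
    by (rule exI[where x="card G", OF exI[where x=S]])
qed

theorem corollary2p2:
  fixes eps :: real and k :: nat
  assumes "eps > 0" and "k \<ge> 2"
  shows "\<exists>\<eta>::real. \<eta> > 0 \<and>
    (\<forall>n::nat. real n > 1 / \<eta> \<longrightarrow>
      (\<forall>\<mu> :: (nat \<Rightarrow> 'a::finite) pmf. set_pmf \<mu> \<subseteq> config n \<longrightarrow>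
        (\<exists>(N::nat) (S :: nat \<Rightarrow> (nat \<Rightarrow> 'a) set).
           (\<forall>i<N. S i \<subseteq> config n \<and> is_state eps k n \<mu> (S i) \<and> measure_pmf.prob \<mu> (S i) \<ge> \<eta>) \<and>
           (\<forall>i<N. \<forall>j<N. i \<noteq> j \<longrightarrow> S i \<inter> S j = {}) \<and>
           (\<Sum>i<N. measure_pmf.prob \<mu> (S i)) \<ge> 1 - eps)))"
proof -
  have "k > 0" using \<open>k \<ge> 2\<close> by simp
  then obtain K :: nat where "K > 0" and partition: "\<forall>n > 0. \<forall>\<mu> :: (nat \<Rightarrow> 'a) pmf. set_pmf \<mu> \<subseteq> config n \<longrightarrow>
    (\<exists>P. partition_on (config n) P \<and> card P \<le> K \<and> nonstate_mass eps k n \<mu> P < eps / 2)"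
    using bounded_partition_into_states[OF \<open>eps > 0\<close>] by blast
  define \<eta> where "\<eta> = eps / (2 * real K)"
  have "\<eta> > 0" using \<open>eps > 0\<close> \<open>K > 0\<close> by (simp add: \<eta>_def)
  moreover have "\<exists>(N::nat) (S :: nat \<Rightarrow> (nat \<Rightarrow> 'a) set).
      (\<forall>i<N. S i \<subseteq> config n \<and> is_state eps k n \<mu> (S i) \<and> measure_pmf.prob \<mu> (S i) \<ge> \<eta>) \<and>
      (\<forall>i<N. \<forall>j<N. i \<noteq> j \<longrightarrow> S i \<inter> S j = {}) \<and> (\<Sum>i<N. measure_pmf.prob \<mu> (S i)) \<ge> 1 - eps"
    if "real n > 1 / \<eta>" and supp: "set_pmf \<mu> \<subseteq> config n" for n and \<mu> :: "(nat \<Rightarrow> 'a) pmf"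
  proof -
    have "1 / \<eta> > 0"
      using \<open>\<eta> > 0\<close> by simp
    then have "n > 0"
      using that(1) by linarith
    then obtain P where "partition_on (config n) P" "card P \<le> K" "nonstate_mass eps k n \<mu> P < eps / 2"
      using partition[rule_format, OF \<open>n > 0\<close> supp] by blast
    then show ?thesis
      unfolding \<eta>_def by (rule large_states_of_partition[OF _ supp])
  qed
  ultimately show ?thesis
    by (intro exI[of _ \<eta>] conjI allI impI) simp_all
qed

end
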